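(* Under the standing assumptions below: 1. If there exists $d<2$ such that $(n^da_n)_{n\in\mathbb{N}}$ is eventually monotonically increasing, then, regardless of $b\in X$ (with all $b_n\ne 0$), there is no $\lambda\in c_H$ for which $k(\lambda)$ is well defined and belongs to $\ell^\infty$. 2. If there exists $d>2$ such that $(n^da_n)_{n\in\mathbb{N}}$ is eventually monotonically decreasing and $\ln(a_n/|b_n|)=o(n)$ as $n\to\infty$, then for every $\lambda\in c_H$ with $\lambda_n/a_n\to0$, we have $k(\lambda)\in\ell^1$.
   Context: $X$ is one of $\ell^p$ ($1\le p\le\infty$), $c$, $c_0$. Standing assumptions: $a=(a_n)$ strictly decreasing positive reals with $a_n\to 0$; $b=(b_n)\in X$ with $b_n\neq0$ for all $n$. $H:=\{z\in\mathbb{C}\mid\operatorname{re} z\le0\}$, $c_H:=\{(\lambda_n)\in c_0\mid\lambda_n\in H\ \forall n\}$. For $\lambda\in c_H$, $$k_n(\lambda):=-\frac{a_n-\lambda_n}{b_n}\prod_{m\ge1,\,m\neq n}\frac{1-\lambda_m/a_n}{1-a_m/a_n}.$$ A real sequence $(x_n)$ is eventually monotonically increasing (decreasing) if it is monotonically increasing (decreasing) for all $n\ge N$ for some $N$. *)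

theory Defs
  imports "HOL-Analysis.Analysis" "HOL-Library.Landau_Symbols"
begin

text \<open>Convention: the paper's sequences (x_n) with n = 1,2,... are represented by
  functions x :: nat => _ with x i standing for x_(i+1); the paper's index n is
  therefore real (Suc i).\<close>

datatype seq_space = Lp real | Linf | Conv | Conv0

definition valid_space :: "seq_space \<Rightarrow> bool" where
  "valid_space X = (case X of Lp p \<Rightarrow> 1 \<le> p | _ \<Rightarrow> True)"

definition in_space :: "seq_space \<Rightarrow> (nat \<Rightarrow> complex) \<Rightarrow> bool" where
  "in_space X x = (case X of
      Lp p \<Rightarrow> summable (\<lambda>n. norm (x n) powr p)
    | Linf \<Rightarrow> bounded (range x)
    | Conv \<Rightarrow> convergent x
    | Conv0 \<Rightarrow> x \<longlonglongrightarrow> 0)"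

definition c_H :: "(nat \<Rightarrow> complex) set" where
  "c_H = {l. l \<longlonglongrightarrow> 0 \<and> (\<forall>n. Re (l n) \<le> 0)}"

text \<open>Factor of the infinite product defining k_n; the excluded index m = n gets factor 1.\<close>
definition k_factor :: "(nat \<Rightarrow> real) \<Rightarrow> (nat \<Rightarrow> complex) \<Rightarrow> nat \<Rightarrow> nat \<Rightarrow> complex" where
  "k_factor a l n m = (if m = n then 1
      else (1 - l m / complex_of_real (a n)) / (1 - complex_of_real (a m / a n)))"

definition k_well_defined :: "(nat \<Rightarrow> real) \<Rightarrow> (nat \<Rightarrow> complex) \<Rightarrow> bool" where
  "k_well_defined a l = (\<forall>n. convergent_prod (k_factor a l n))"

definition k :: "(nat \<Rightarrow> real) \<Rightarrow> (nat \<Rightarrow> complex) \<Rightarrow> (nat \<Rightarrow> complex) \<Rightarrow> nat \<Rightarrow> complex" where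
  "k a b l n = - ((complex_of_real (a n) - l n) / b n) * (\<Prod>m. k_factor a l n m)"

definition eventually_incr :: "(nat \<Rightarrow> real) \<Rightarrow> bool" where
  "eventually_incr x = (\<exists>N. \<forall>m n. N \<le> m \<longrightarrow> m \<le> n \<longrightarrow> x m \<le> x n)"

definition eventually_decr :: "(nat \<Rightarrow> real) \<Rightarrow> bool" where
  "eventually_decr x = (\<exists>N. \<forall>m n. N \<le> m \<longrightarrow> m \<le> n \<longrightarrow> x n \<le> x m)"

end

theory Submission
  imports Defs "HOL-Real_Asymp.Real_Asymp"
begin

text \<open>The factors of \<open>k\<^sub>n\<close> are compared with those for the reference nodes \<open>a\<^sub>m = (m+1)\<^sup>-\<^sup>2\<close> and
  \<open>\<lambda> = 0\<close>, whose moduli \<open>1 / |1 - ((n+1)/(m+1))\<^sup>2|\<close> have explicitly computable partial products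
  tending to \<open>1/2\<close>. Monotonicity of \<open>n\<^sup>d a\<^sub>n\<close> compares \<open>a\<^sub>m / a\<^sub>n\<close> with \<open>((n+1)/(m+1))\<^sup>d\<close>.

  If \<open>n\<^sup>d a\<^sub>n\<close> eventually increases with \<open>d < 2\<close>, then, as \<open>Re \<lambda>\<^sub>m \<le> 0\<close>, all but boundedly many factors
  dominate their reference factors, and the roughly \<open>n/2\<close> factors with \<open>2(m+1) \<le> n+1\<close> even by the
  fixed ratio \<open>2\<^sup>2\<^sup>-\<^sup>d > 1\<close>; the exceptions only cost a polynomial factor, so \<open>|k\<^sub>n|\<close> grows exponentially.

  If \<open>n\<^sup>d a\<^sub>n\<close> eventually decreases with \<open>d > 2\<close> and \<open>\<lambda>\<^sub>m = o(a\<^sub>m)\<close>, fix a large \<open>T\<close>. Each of the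
  \<open>J \<approx> (n+1)/T\<close> factors with \<open>(m+1) T \<le> n+1\<close> is at most \<open>\<eta> ((n+1)/(m+1))\<^sup>2\<close> times its reference factor,
  with \<open>\<eta> \<approx> 2 T\<^sup>-\<^sup>d\<close>, and the product \<open>((n+1)\<^sup>J / J!)\<^sup>2\<close> of the squares is only \<open>e\<^bsup>O(n log T / T)\<^esup>\<close>; every
  other factor exceeds its reference factor by at most \<open>1 + O(\<epsilon> T\<^sup>2)\<close>. As \<open>d > 2\<close>, the gain
  \<open>\<eta>\<^bsup>J\<^esup> = e\<^bsup>-d n log T / T + O(n/T)\<^esup>\<close> wins, so \<open>|k\<^sub>n|\<close> decays geometrically; the hypothesis
  \<open>log (a\<^sub>n / |b\<^sub>n|) = o(n)\<close> keeps the prefactor \<open>(a\<^sub>n - \<lambda>\<^sub>n) / b\<^sub>n\<close> subexponential.\<close>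

lemma prod_if_const_power:
  fixes c :: "'a::comm_monoid_mult"
  assumes "finite A"
  shows "(\<Prod>m\<in>A. if P m then c else 1) = c ^ card {m\<in>A. P m}"
proof -
  have "(\<Prod>m\<in>A. if P m then c else 1) = (\<Prod>m\<in>A \<inter> {m. P m}. c) * (\<Prod>m\<in>A \<inter> - {m. P m}. 1)"
    by (rule prod.If_cases[OF assms])
  also have "A \<inter> {m. P m} = {m\<in>A. P m}" by blast
  finally show ?thesis by simp
qed

lemma prod_piecewise_split:
  fixes f h :: "nat \<Rightarrow> 'a::comm_monoid_mult"
  assumes "K \<le> J" "J \<le> n" "n < M"
  shows "(\<Prod>m\<in>{..<M}-{n}. if m < K then \<alpha> * f m else if m < J then \<beta> * f m else if m < n then \<gamma> else h m)
    = \<alpha> ^ K * \<beta> ^ (J - K) * (\<Prod>m<J. f m) * \<gamma> ^ (n - J) * (\<Prod>m\<in>{n<..<M}. h m)"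
    (is "prod ?u _ = _")
proof -
  define R where "R = {..<M} - {n}"
  have "?u m = (if m < K then \<alpha> else 1) * (if K \<le> m \<and> m < J then \<beta> else 1) * (if m < J then f m else 1)
      * (if J \<le> m \<and> m < n then \<gamma> else 1) * (if n < m then h m else 1)" if "m \<in> R" for m
    using that assms unfolding R_def by auto
  then have "prod ?u R = (\<Prod>m\<in>R. if m < K then \<alpha> else 1) * (\<Prod>m\<in>R. if K \<le> m \<and> m < J then \<beta> else 1)
      * (\<Prod>m\<in>R. if m < J then f m else 1) * (\<Prod>m\<in>R. if J \<le> m \<and> m < n then \<gamma> else 1)
      * (\<Prod>m\<in>R. if n < m then h m else 1)"
    by (simp add: prod.distrib[symmetric] cong: prod.cong)
  also have "\<dots> = \<alpha> ^ card {m\<in>R. m < K} * \<beta> ^ card {m\<in>R. K \<le> m \<and> m < J}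
      * (\<Prod>m\<in>{m\<in>R. m < J}. f m) * \<gamma> ^ card {m\<in>R. J \<le> m \<and> m < n}
      * (\<Prod>m\<in>{m\<in>R. n < m}. h m)"
    using finite_Diff[of "{..<M}" "{n}"] by (simp add: prod_if_const_power prod.inter_filter flip: R_def)
  also have "{m\<in>R. m < K} = {..<K}" using assms unfolding R_def by auto
  also have "{m\<in>R. K \<le> m \<and> m < J} = {K..<J}" using assms unfolding R_def by auto
  also have "{m\<in>R. m < J} = {..<J}" using assms unfolding R_def by auto
  also have "{m\<in>R. J \<le> m \<and> m < n} = {J..<n}" using assms unfolding R_def by auto
  also have "{m\<in>R. n < m} = {n<..<M}" using assms unfolding R_def by auto
  finally show ?thesis unfolding R_def by simp
qed

lemma fact_add_eq_mult_prod: "fact (m + j) = (fact m :: real) * (\<Prod>i<j. real (m + 1 + i))"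
  by (induction j) (simp_all add: algebra_simps)

lemma fact_diff_mult_fact_add_div_fact_square:
  assumes "j \<le> M"
  shows "fact (M - j) * fact (M + j) / (fact M)^2 = (\<Prod>i<j. real (M + 1 + i) / real (M - j + 1 + i))"
proof -
  have fact_M: "fact M = (fact (M - j) :: real) * (\<Prod>i<j. real (M - j + 1 + i))"
    using fact_add_eq_mult_prod[of "M - j" j] assms by simp
  have "(\<Prod>i<j. real (M - j + 1 + i)) > 0" by (intro prod_pos) auto
  then have "fact (M - j) * fact (M + j) / (fact M)^2 = (\<Prod>i<j. real (M + 1 + i)) / (\<Prod>i<j. real (M - j + 1 + i))"
    unfolding fact_add_eq_mult_prod[of M j] power2_eq_square by (subst (2) fact_M) (simp add: field_simps)
  then show ?thesis by (simp add: prod_dividef)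
qed

lemma prod_square_Suc_ratio: "(\<Prod>m<J. (N / real (Suc m))\<^sup>2) = (N ^ J / fact J)\<^sup>2"
proof -
  have "(\<Prod>m<J. (N / real (Suc m))\<^sup>2) = (\<Prod>m<J. N / real (Suc m))\<^sup>2" by (simp add: prod_power_distrib)
  also have "(\<Prod>m<J. N / real (Suc m)) = N ^ J / (\<Prod>m<J. real (Suc m))" by (simp add: prod_dividef)
  also have "(\<Prod>m<J. real (Suc m)) = fact J" by (simp add: fact_prod_Suc lessThan_atLeast0)
  finally show ?thesis .
qed

lemma pow_div_fact_le_exp:
  fixes y :: real
  assumes "y \<ge> 0"
  shows "y ^ j / fact j \<le> exp y"
proof -
  have s: "(\<lambda>n. y ^ n / fact n) sums exp y"
    using exp_converges[of y] by (simp add: divide_inverse_commute)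
  have "(\<Sum>n\<in>{j}. y ^ n / fact n) \<le> (\<Sum>n. y ^ n / fact n)"
    using s assms by (intro sum_le_suminf) (auto simp: sums_iff)
  then show ?thesis using s by (simp add: sums_iff)
qed

lemma pow_div_fact_le_exp_scaled:
  fixes N T :: real
  assumes "1 \<le> T" "real J \<le> N / T" "0 \<le> N"
  shows "N ^ J / fact J \<le> exp (N / T * (ln T + 1))"
proof -
  have "N ^ J / fact J = T ^ J * ((N / T) ^ J / fact J)" using assms by (simp add: power_divide)
  also have "\<dots> \<le> T ^ J * exp (N / T)"
    using assms by (intro mult_left_mono pow_div_fact_le_exp) auto
  also have "T ^ J = exp (real J * ln T)" using assms by (simp add: exp_of_nat_mult)
  also have "\<dots> \<le> exp (N / T * ln T)" using assms by (intro exp_mono mult_right_mono) auto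
  finally have "N ^ J / fact J \<le> exp (N / T * ln T) * exp (N / T)" by (simp add: mult_right_mono)
  also have "\<dots> = exp (N / T * (ln T + 1))" by (simp add: exp_add[symmetric] algebra_simps)
  finally show ?thesis .
qed

lemma power_diff_le_exp_ln:
  fixes \<eta> x :: real
  assumes "0 < \<eta>" "\<eta> \<le> 1" "x \<le> real J" "K \<le> J"
  shows "\<eta> ^ (J - K) \<le> exp ((x - real K) * ln \<eta>)"
proof -
  have "\<eta> ^ (J - K) = exp (ln \<eta>) ^ (J - K)" using assms by simp
  also have "\<dots> = exp (real (J - K) * ln \<eta>)" by (simp only: exp_of_nat_mult)
  also have "\<dots> \<le> exp ((x - real K) * ln \<eta>)"
    using assms by (auto simp: of_nat_diff intro!: mult_right_mono_neg)
  finally show ?thesis .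
qed

lemma one_plus_power_le_exp:
  fixes c :: real
  assumes "0 \<le> c" "j \<le> n"
  shows "(1 + c) ^ j \<le> exp (c * real (Suc n))"
proof -
  have "(1 + c) ^ j \<le> exp c ^ j" using assms by (intro power_mono) (auto intro: exp_ge_add_one_self)
  also have "\<dots> = exp (c * real j)" by (simp add: exp_of_nat2_mult)
  also have "\<dots> \<le> exp (c * real (Suc n))" using assms by (intro exp_mono mult_left_mono) auto
  finally show ?thesis .
qed

lemma sum_inverse_square_le:
  "(\<Sum>m\<in>{n<..<M}. 1 / real (Suc m)^2) \<le> 1 / real (Suc n)"
proof -
  have telescope: "(\<Sum>m\<in>{n<..<M}. 1 / real (Suc m)^2) + 1 / real M \<le> 1 / real (Suc n)"
    if "Suc n \<le> M" for M
    using that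
  proof (induction M rule: dec_induct)
    case base
    have "{n<..<Suc n} = {}" by auto
    then show ?case by simp
  next
    case (step M)
    have "{n<..<Suc M} = insert M {n<..<M}" using step by auto
    moreover have "1 / real (Suc M)^2 \<le> 1 / real M - 1 / real (Suc M)"
    proof -
      have "1 / real (Suc M)^2 \<le> 1 / (real M * real (Suc M))"
        using step by (intro divide_left_mono) (auto simp: power2_eq_square)
      also have "\<dots> = 1 / real M - 1 / real (Suc M)" using step by (simp add: field_simps)
      finally show ?thesis .
    qed
    ultimately show ?case using step.IH by simp
  qed
  show ?thesis
  proof (cases "Suc n \<le> M")
    case True
    have "1 / real M \<ge> 0" by simp
    with telescope[OF True] show ?thesis by linarith
  next
    case False
    then have "{n<..<M} = {}" by auto
    then show ?thesis by simp
  qed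
qed

lemma prod_one_plus_le_exp:
  assumes "\<epsilon> \<ge> 0"
  shows "(\<Prod>m\<in>{n<..<M}. 1 + \<epsilon> * (real (Suc n) / real (Suc m))\<^sup>2) \<le> exp (\<epsilon> * real (Suc n))"
proof -
  have "(\<Prod>m\<in>{n<..<M}. 1 + \<epsilon> * (real (Suc n) / real (Suc m))\<^sup>2)
      \<le> (\<Prod>m\<in>{n<..<M}. exp (\<epsilon> * (real (Suc n) / real (Suc m))\<^sup>2))"
    using assms by (intro prod_mono conjI) (auto intro: exp_ge_add_one_self add_nonneg_nonneg)
  also have "\<dots> = exp (\<epsilon> * real (Suc n) ^ 2 * (\<Sum>m\<in>{n<..<M}. 1 / real (Suc m) ^ 2))"
    by (simp add: exp_sum sum_distrib_left power_divide)
  also have "\<dots> \<le> exp (\<epsilon> * real (Suc n) ^ 2 * (1 / real (Suc n)))"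
    using assms by (intro exp_mono mult_left_mono sum_inverse_square_le) auto
  also have "\<epsilon> * real (Suc n) ^ 2 * (1 / real (Suc n)) = \<epsilon> * real (Suc n)" by (simp add: power2_eq_square)
  finally show ?thesis .
qed

lemma div_le_ratio_powr:
  fixes u v x y d :: real
  assumes "u powr d * x \<le> v powr d * y" "u > 0" "v > 0" "y > 0"
  shows "x / y \<le> (v / u) powr d"
proof -
  have "u powr d * y > 0" using assms by simp
  then have "u powr d * x / (u powr d * y) \<le> v powr d * y / (u powr d * y)"
    by (intro divide_right_mono[OF assms(1)]) simp
  then show ?thesis using assms by (simp add: powr_divide)
qed

lemma ratio_powr_le_div:
  fixes u v x y d :: real
  assumes "v powr d * y \<le> u powr d * x" "u > 0" "v > 0" "y > 0"
  shows "(v / u) powr d \<le> x / y"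
proof -
  have "u powr d * y > 0" using assms by simp
  then have "v powr d * y / (u powr d * y) \<le> u powr d * x / (u powr d * y)"
    by (intro divide_right_mono[OF assms(1)]) simp
  then show ?thesis using assms by (simp add: powr_divide)
qed

lemma powr_minus_one_le:
  fixes x d :: real
  assumes "x \<ge> 1" "d \<le> 2"
  shows "x powr d - 1 \<le> x powr (d - 2) * (x\<^sup>2 - 1)"
proof -
  have "x powr d = x powr (d - 2) * x powr 2" by (simp flip: powr_add)
  also have "x powr 2 = x\<^sup>2" using assms by (simp add: powr_numeral)
  finally have "x powr d = x powr (d - 2) * x\<^sup>2" .
  moreover have "x powr (d - 2) \<le> 1" using assms powr_mono[of "d - 2" 0 x] by simp
  ultimately show ?thesis by (simp add: algebra_simps)
qed

lemma gap_cross_mult_le: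
  fixes A B s \<epsilon> :: real
  assumes "0 < (B - A) * (s - 1)" "0 \<le> (B - s * A) * (s - 1)" "0 \<le> \<epsilon>"
  shows "(A + \<epsilon> * B) * \<bar>1 - s\<bar> \<le> (1 + \<epsilon> * s) * \<bar>A - B\<bar>"
proof (cases "1 < s")
  case True
  with assms have "A < B" "s * A \<le> B" by (simp_all add: zero_less_mult_iff zero_le_mult_iff)
  then have "0 \<le> (1 + \<epsilon>) * (B - s * A)" using assms(3) by simp
  also have "\<dots> = (1 + \<epsilon> * s) * (B - A) - (A + \<epsilon> * B) * (s - 1)" by (simp add: algebra_simps)
  finally show ?thesis using True \<open>A < B\<close> by simp
next
  case False
  with assms have "s < 1" "B < A" "B \<le> s * A" by (auto simp: zero_less_mult_iff zero_le_mult_iff)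
  then have "0 \<le> (1 + \<epsilon>) * (s * A - B)" using assms(3) by simp
  also have "\<dots> = (1 + \<epsilon> * s) * (A - B) - (A + \<epsilon> * B) * (1 - s)" by (simp add: algebra_simps)
  finally show ?thesis using \<open>s < 1\<close> \<open>B < A\<close> by simp
qed

lemma two_le_Suc_ratio:
  assumes "2 * Suc m \<le> Suc n"
  shows "2 \<le> real (Suc n) / real (Suc m)"
proof -
  have "real (Suc m) * 2 \<le> real (Suc n)" using assms by (simp only: of_nat_le_iff flip: of_nat_mult)
  then show ?thesis by (simp add: field_simps)
qed

lemma norm_of_real_diff_ge:
  assumes "Re z \<le> 0"
  shows "c \<le> norm (complex_of_real c - z)"
  using complex_Re_le_cmod[of "complex_of_real c - z"] assms by simp

lemma summable_of_powr_decay: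
  fixes a :: "nat \<Rightarrow> real"
  assumes nonneg: "\<And>n. 0 \<le> a n" and "d > 1"
    and decr: "\<And>i j. N0 \<le> i \<Longrightarrow> i \<le> j \<Longrightarrow> real (Suc j) powr d * a j \<le> real (Suc i) powr d * a i"
  shows "summable a"
proof (rule summable_comparison_test_ev)
  define c where "c = real (Suc N0) powr d * a N0"
  have "summable (\<lambda>n. real (Suc n) powr (- d))"
    using summable_real_powr_iff[of "- d"] \<open>d > 1\<close> summable_ignore_initial_segment[of "\<lambda>n. real n powr (- d)" 1]
    by (simp del: of_nat_Suc)
  then show "summable (\<lambda>n. c * real (Suc n) powr (- d))" by (rule summable_mult)
  show "eventually (\<lambda>n. norm (a n) \<le> c * real (Suc n) powr (- d)) sequentially"
    using eventually_ge_at_top[of N0]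
  proof eventually_elim
    case (elim n)
    have "a n = real (Suc n) powr d * a n * real (Suc n) powr (- d)" by (simp add: powr_minus)
    also have "\<dots> \<le> c * real (Suc n) powr (- d)"
      unfolding c_def using elim by (intro mult_right_mono decr) auto
    finally show ?case using nonneg[of n] by simp
  qed
qed

lemma summable_norm_of_le_exp:
  fixes f :: "nat \<Rightarrow> 'a::real_normed_vector"
  assumes "F < 0" "eventually (\<lambda>n. norm (f n) \<le> C * exp (F * real (Suc n))) sequentially"
  shows "summable (\<lambda>n. norm (f n))"
proof (rule summable_comparison_test_ev)
  show "summable (\<lambda>n. C * exp F * exp F ^ n)" using assms(1) by (intro summable_mult summable_geometric) simp
  have "exp (F * real (Suc n)) = exp F * exp F ^ n" for n
    by (simp add: exp_of_nat_mult[symmetric] exp_add[symmetric] algebra_simps)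
  then show "eventually (\<lambda>n. norm (norm (f n)) \<le> C * exp F * exp F ^ n) sequentially"
    using assms(2) by (simp add: mult.assoc)
qed

lemma eventually_norm_le_mult:
  fixes l :: "nat \<Rightarrow> complex"
  assumes "(\<lambda>n. l n / complex_of_real (a n)) \<longlonglongrightarrow> 0" "\<And>n. a n > 0" "\<epsilon> > 0"
  shows "eventually (\<lambda>m. norm (l m) \<le> \<epsilon> * a m) sequentially"
  using tendstoD[OF assms(1,3)]
proof eventually_elim
  case (elim m)
  then show ?case using assms(2)[of m] by (simp add: dist_norm norm_divide divide_less_eq less_imp_le)
qed

lemma norm_prodinf_le:
  fixes f :: "nat \<Rightarrow> 'a::real_normed_field"
  assumes "convergent_prod f" "eventually (\<lambda>M. norm (\<Prod>m<M. f m) \<le> c) sequentially"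
  shows "norm (prodinf f) \<le> c"
  using tendsto_norm[OF has_prod_imp_tendsto'[OF convergent_prod_has_prod[OF assms(1)]]] assms(2)
  by (rule tendsto_upperbound) simp

lemma norm_prodinf_ge:
  fixes f :: "nat \<Rightarrow> 'a::real_normed_field"
  assumes "convergent_prod f" "eventually (\<lambda>M. norm (\<Prod>m<M. f m) \<ge> c) sequentially"
  shows "norm (prodinf f) \<ge> c"
  using tendsto_norm[OF has_prod_imp_tendsto'[OF convergent_prod_has_prod[OF assms(1)]]] assms(2)
  by (rule tendsto_lowerbound) simp

lemma in_space_imp_bounded:
  assumes "valid_space X" "in_space X x"
  shows "bounded (range x)"
proof (cases X)
  case (Lp p)
  then have "1 \<le> p" "summable (\<lambda>n. norm (x n) powr p)"
    using assms by (auto simp: valid_space_def in_space_def)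
  then have "(\<lambda>n. (norm (x n) powr p) powr (1 / p)) \<longlonglongrightarrow> 0"
    by (intro tendsto_zero_powrI summable_LIMSEQ_zero) auto
  then have "(\<lambda>n. norm (x n)) \<longlonglongrightarrow> 0" using \<open>1 \<le> p\<close> by (simp add: powr_powr)
  then show ?thesis by (intro convergent_imp_bounded) (simp add: tendsto_norm_zero_iff)
qed (use assms in \<open>auto simp: in_space_def convergent_def intro: convergent_imp_bounded\<close>)

section \<open>The reference products\<close>

text \<open>\<open>1 / quad_gap n m\<close> is the modulus of \<open>k_factor a (\<lambda>_. 0) n m\<close> for \<open>a m = (m+1)\<^sup>-\<^sup>2\<close>.\<close>

definition quad_gap :: "nat \<Rightarrow> nat \<Rightarrow> real" where
  "quad_gap n m = \<bar>1 - (real (Suc n) / real (Suc m))\<^sup>2\<bar>"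

lemma quad_gap_pos: "m \<noteq> n \<Longrightarrow> quad_gap n m > 0"
  unfolding quad_gap_def by (auto simp: power_divide)

lemma quad_gap_eq: "quad_gap n m = \<bar>real m - real n\<bar> * real (m + n + 2) / real (Suc m) ^ 2"
proof -
  have "1 - (real (Suc n) / real (Suc m))\<^sup>2 = (real (Suc m) ^ 2 - real (Suc n) ^ 2) / real (Suc m) ^ 2"
    by (simp add: diff_divide_distrib power_divide)
  also have "real (Suc m) ^ 2 - real (Suc n) ^ 2 = (real m - real n) * real (m + n + 2)"
    by (simp add: power2_eq_square algebra_simps)
  finally show ?thesis unfolding quad_gap_def by (simp add: abs_mult)
qed

lemma quad_gap_ge_one:
  assumes "2 * Suc m \<le> Suc n"
  shows "quad_gap n m \<ge> 1"
proof -
  have "(real (Suc n) / real (Suc m))\<^sup>2 \<ge> 2\<^sup>2"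
    using two_le_Suc_ratio[OF assms] by (rule power_mono) simp
  then show ?thesis unfolding quad_gap_def by simp
qed

lemma quad_gap_le_square:
  assumes "m < n"
  shows "quad_gap n m \<le> (real (Suc n) / real (Suc m))\<^sup>2"
proof -
  have "1 \<le> (real (Suc n) / real (Suc m))\<^sup>2" using assms by (simp add: one_le_power)
  then show ?thesis unfolding quad_gap_def by simp
qed

lemma prod_abs_diff_remove:
  assumes "n < M"
  shows "(\<Prod>m\<in>{..<M}-{n}. \<bar>real m - real n\<bar>) = fact n * fact (M - Suc n)"
  using assms
proof (induction M)
  case 0
  then show ?case by simp
next
  case (Suc M)
  show ?case
  proof (cases "M = n")
    case True
    have "{..<Suc M} - {n} = {0..<n}" using True by auto
    then have "(\<Prod>m\<in>{..<Suc M}-{n}. \<bar>real m - real n\<bar>) = (\<Prod>m=0..<n. real (n - m))"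
      by (intro prod.cong) auto
    also have "\<dots> = fact n" by (simp add: fact_prod_rev)
    finally show ?thesis using True by simp
  next
    case False
    then have "n < M" using Suc by simp
    then have "{..<Suc M} - {n} = insert M ({..<M} - {n})" "Suc M - Suc n = Suc (M - Suc n)" by auto
    with Suc.IH \<open>n < M\<close> show ?thesis by (simp add: of_nat_diff)
  qed
qed

lemma prod_Suc_remove:
  assumes "n < M"
  shows "(\<Prod>m\<in>{..<M}-{n}. real (Suc m)) = fact M / real (Suc n)"
proof -
  have "(\<Prod>m\<in>{..<M}. real (Suc m)) = real (Suc n) * (\<Prod>m\<in>{..<M}-{n}. real (Suc m))"
    using assms by (subst prod.remove[of _ n]) auto
  moreover have "(\<Prod>m\<in>{..<M}. real (Suc m)) = fact M"
    by (simp add: fact_prod_Suc lessThan_atLeast0)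
  ultimately show ?thesis by (simp add: field_simps)
qed

lemma prod_add_two_remove:
  assumes "n < M"
  shows "(\<Prod>m\<in>{..<M}-{n}. real (m + n + 2)) = fact (M + n + 1) / (fact (n + 1) * (2 * real (Suc n)))"
proof -
  have full: "(\<Prod>m<M. real (m + n + 2)) = fact (M + n + 1) / fact (n + 1)" for M
    by (induction M) (simp, simp add: fact_Suc field_simps)
  have "(\<Prod>m\<in>{..<M}. real (m + n + 2)) = real (n + n + 2) * (\<Prod>m\<in>{..<M}-{n}. real (m + n + 2))"
    using assms by (subst prod.remove[of _ n]) auto
  then have "real (n + n + 2) * (\<Prod>m\<in>{..<M}-{n}. real (m + n + 2)) = fact (M + n + 1) / fact (n + 1)"
    using full[of M] by simp
  moreover have "real (n + n + 2) = 2 * real (Suc n)" by simp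
  ultimately show ?thesis
    by (simp add: field_simps del: fact_Suc of_nat_Suc of_nat_add)
qed

lemma prod_quad_gap_eq:
  assumes "n < M"
  shows "(\<Prod>m\<in>{..<M}-{n}. quad_gap n m) = (\<Prod>i<Suc n. real (M + 1 + i) / real (M - n + i)) / 2"
proof -
  have "(\<Prod>m\<in>{..<M}-{n}. quad_gap n m) = (\<Prod>m\<in>{..<M}-{n}. \<bar>real m - real n\<bar>) *
      (\<Prod>m\<in>{..<M}-{n}. real (m + n + 2)) / (\<Prod>m\<in>{..<M}-{n}. real (Suc m))\<^sup>2"
    by (simp add: quad_gap_eq prod.distrib prod_dividef power_divide prod_power_distrib)
  also have "\<dots> = fact (M - Suc n) * fact (M + Suc n) / (fact M)\<^sup>2 / 2"
  proof -
    have "fact (n + 1) = real (Suc n) * fact n" by simp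
    moreover have "fact n > (0::real)" "fact M > (0::real)" by auto
    ultimately show ?thesis
      unfolding prod_abs_diff_remove[OF assms] prod_add_two_remove[OF assms] prod_Suc_remove[OF assms]
      by (simp only: power2_eq_square) (simp add: field_simps del: fact_Suc of_nat_Suc)
  qed
  also have "\<dots> = (\<Prod>i<Suc n. real (M + 1 + i) / real (M - n + i)) / 2"
    using assms by (subst fact_diff_mult_fact_add_div_fact_square) (auto intro!: prod.cong)
  finally show ?thesis .
qed

lemma prod_quad_gap_ge:
  assumes "n < M"
  shows "(\<Prod>m\<in>{..<M}-{n}. quad_gap n m) \<ge> 1/2"
proof -
  have "(\<Prod>i<Suc n. real (M + 1 + i) / real (M - n + i)) \<ge> 1"
    using assms by (intro prod_ge_1) (auto simp: le_divide_eq_1 of_nat_diff)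
  then show ?thesis unfolding prod_quad_gap_eq[OF assms] by linarith
qed

lemma prod_quad_gap_tendsto: "(\<lambda>M. \<Prod>m\<in>{..<M}-{n}. quad_gap n m) \<longlonglongrightarrow> 1/2"
proof -
  have "(\<lambda>M. real (M + 1 + i) / real (M - n + i)) \<longlonglongrightarrow> 1" for i
  proof -
    have "(\<lambda>M. (real M + 1 + real i) / (real M - real n + real i)) \<longlonglongrightarrow> 1"
      by real_asymp
    then show ?thesis
      by (rule Lim_transform_eventually)
        (auto simp: eventually_at_top_linorder of_nat_diff intro!: exI[of _ n])
  qed
  then have "(\<lambda>M. (\<Prod>i<Suc n. real (M + 1 + i) / real (M - n + i)) / 2) \<longlonglongrightarrow> (\<Prod>i<Suc n. 1) / 2"
    by (intro tendsto_divide tendsto_prod tendsto_const) auto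
  then have "(\<lambda>M. (\<Prod>i<Suc n. real (M + 1 + i) / real (M - n + i)) / 2) \<longlonglongrightarrow> 1/2"
    by simp
  moreover have "eventually (\<lambda>M. (\<Prod>i<Suc n. real (M + 1 + i) / real (M - n + i)) / 2 =
      (\<Prod>m\<in>{..<M}-{n}. quad_gap n m)) sequentially"
    using eventually_gt_at_top[of n] by eventually_elim (simp only: prod_quad_gap_eq)
  ultimately show ?thesis by (rule Lim_transform_eventually)
qed

section \<open>The factors of \<open>k\<close>\<close>

lemma prod_k_factor_remove:
  assumes "n < M"
  shows "(\<Prod>m<M. k_factor a l n m) = (\<Prod>m\<in>{..<M}-{n}. k_factor a l n m)"
  using assms by (subst prod.remove[of _ n]) (auto simp: k_factor_def)

lemma norm_prod_k_factor_le_double: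
  assumes "n < M" "\<And>m. m \<in> {..<M}-{n} \<Longrightarrow> norm (k_factor a l n m) * quad_gap n m \<le> u m"
  shows "norm (\<Prod>m<M. k_factor a l n m) \<le> 2 * (\<Prod>m\<in>{..<M}-{n}. u m)"
proof -
  define R where "R = {..<M} - {n}"
  have gap: "1/2 \<le> prod (quad_gap n) R" unfolding R_def using assms(1) by (rule prod_quad_gap_ge)
  then have "prod (quad_gap n) R \<noteq> 0" by linarith
  then have "norm (\<Prod>m<M. k_factor a l n m)
      = (\<Prod>m\<in>R. norm (k_factor a l n m) * quad_gap n m) / prod (quad_gap n) R"
    unfolding prod_k_factor_remove[OF assms(1)] R_def by (simp add: prod_norm prod.distrib)
  also have "\<dots> \<le> prod u R / (1/2)"
  proof -
    have "0 \<le> norm (k_factor a l n m) * quad_gap n m" if "m \<in> R" for m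
      using quad_gap_pos[of m n] that unfolding R_def by simp
    with assms(2)[folded R_def] gap show ?thesis
      by (intro frac_le prod_mono prod_nonneg) (auto intro: order_trans)
  qed
  finally show ?thesis unfolding R_def by simp
qed

locale pos_strict_decseq =
  fixes a :: "nat \<Rightarrow> real"
  assumes strict_decr: "m < n \<Longrightarrow> a n < a m"
    and pos: "0 < a n"
begin

lemma values_neq: "m \<noteq> n \<Longrightarrow> a m \<noteq> a n"
  using strict_decr[of m n] strict_decr[of n m] by (cases "m < n") auto

lemma le_first: "a n \<le> a 0"
  using strict_decr[of 0 n] by (cases n) auto

lemma k_factor_eq:
  assumes "m \<noteq> n"
  shows "k_factor a l n m = (complex_of_real (a n) - l m) / complex_of_real (a n - a m)"
proof -
  have "a n \<noteq> 0" "a n \<noteq> a m" using pos[of n] values_neq[OF assms] by auto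
  then show ?thesis
    using assms unfolding k_factor_def by (simp add: field_simps)
qed

lemma norm_k_factor_eq:
  assumes "m \<noteq> n"
  shows "norm (k_factor a l n m) = norm (complex_of_real (a n) - l m) / \<bar>a n - a m\<bar>"
  by (simp only: k_factor_eq[OF assms] norm_divide norm_of_real)

lemma norm_k_factor_le:
  assumes "m \<noteq> n" "norm (l m) \<le> c"
  shows "norm (k_factor a l n m) \<le> (a n + c) / \<bar>a n - a m\<bar>"
proof -
  have "norm (complex_of_real (a n) - l m) \<le> a n + c"
    using norm_triangle_ineq4[of "complex_of_real (a n)" "l m"] pos[of n] assms(2) by simp
  then show ?thesis unfolding norm_k_factor_eq[OF assms(1)] by (rule divide_right_mono) simp
qed

lemma norm_k_factor_ge:
  assumes "m \<noteq> n" "Re (l m) \<le> 0"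
  shows "1 / \<bar>1 - a m / a n\<bar> \<le> norm (k_factor a l n m)"
proof -
  have "1 - a m / a n = (a n - a m) / a n" using pos[of n] by (simp add: field_simps)
  then have "1 / \<bar>1 - a m / a n\<bar> = a n / \<bar>a n - a m\<bar>" using pos[of n] by simp
  also have "\<dots> \<le> norm (k_factor a l n m)"
    unfolding norm_k_factor_eq[OF assms(1)]
    using norm_of_real_diff_ge[OF assms(2), of "a n"] by (rule divide_right_mono) simp
  finally show ?thesis .
qed

lemma first_ratio_mult_gap_le_one:
  assumes "m < n"
  shows "a n / a 0 * \<bar>1 - a m / a n\<bar> \<le> 1"
proof -
  have "\<bar>1 - a m / a n\<bar> \<le> a m / a n"
    using strict_decr[OF assms] pos[of n] by (simp add: field_simps)
  then have "a n / a 0 * \<bar>1 - a m / a n\<bar> \<le> a n / a 0 * (a m / a n)"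
    using pos[of n] pos[of 0] by (intro mult_left_mono) auto
  also have "\<dots> \<le> 1" using pos[of n] pos[of 0] le_first[of m] by simp
  finally show ?thesis .
qed

lemma convergent_prod_k_factor:
  assumes "summable a" "\<And>m. Re (l m) \<le> 0" "eventually (\<lambda>m. norm (l m) \<le> a m) sequentially"
  shows "convergent_prod (k_factor a l n)"
proof -
  define z where "z m = k_factor a l n m - 1" for m
  have "z m \<noteq> -1" for m
  proof (cases "m = n")
    case False
    have "a n \<le> norm (complex_of_real (a n) - l m)" using assms(2) by (rule norm_of_real_diff_ge)
    then show ?thesis using pos[of n] values_neq[OF False] unfolding z_def k_factor_eq[OF False] by auto
  qed (simp add: z_def k_factor_def)
  moreover have "summable (\<lambda>m. norm (z m))"
  proof (rule summable_comparison_test_ev)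
    show "summable (\<lambda>m. 2 / (a n - a (Suc n)) * a m)" using assms(1) by (rule summable_mult)
    show "eventually (\<lambda>m. norm (norm (z m)) \<le> 2 / (a n - a (Suc n)) * a m) sequentially"
      using assms(3) eventually_gt_at_top[of n]
    proof eventually_elim
      case (elim m)
      then have "m \<noteq> n" by simp
      have "z m = (complex_of_real (a m) - l m) / complex_of_real (a n - a m)"
        using values_neq[OF \<open>m \<noteq> n\<close>] unfolding z_def k_factor_eq[OF \<open>m \<noteq> n\<close>] by (simp add: field_simps)
      then have "norm (z m) = norm (complex_of_real (a m) - l m) / (a n - a m)"
        using strict_decr[of n m] elim by (simp only: norm_divide norm_of_real) simp
      also have "\<dots> \<le> (2 * a m) / (a n - a (Suc n))"
      proof (rule frac_le)
        show "norm (complex_of_real (a m) - l m) \<le> 2 * a m"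
          using norm_triangle_ineq4[of "complex_of_real (a m)" "l m"] elim pos[of m] by simp
        show "a n - a (Suc n) \<le> a n - a m"
          using strict_decr[of "Suc n" m] elim by (cases "Suc n = m") auto
      qed (use pos[of m] strict_decr[of n "Suc n"] in auto)
      finally show ?case by simp
    qed
  qed
  ultimately have "convergent_prod (\<lambda>m. 1 + z m)" by (intro summable_imp_convergent_prod_complex)
  then show ?thesis unfolding z_def by simp
qed

lemma norm_k_factor_le_initial:
  assumes "m < n" "norm (l m) \<le> L"
  shows "norm (k_factor a l n m) \<le> (a 0 + L) / (a m - a (Suc m))"
proof -
  have "a m - a (Suc m) \<le> \<bar>a n - a m\<bar>"
    using strict_decr[OF assms(1)] strict_decr[of "Suc m" n] assms(1) by (cases "Suc m = n") auto
  moreover have "0 < a m - a (Suc m)" using strict_decr[of m "Suc m"] by simp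
  ultimately have "(a n + L) / \<bar>a n - a m\<bar> \<le> (a 0 + L) / (a m - a (Suc m))"
    using assms(2) le_first[of n] pos[of n] norm_ge_zero[of "l m"] by (intro frac_le) linarith+
  with norm_k_factor_le[of m n l L] assms show ?thesis by simp
qed

text \<open>With \<open>s = ((n+1)/(m+1))\<^sup>2\<close>, the sign condition says that \<open>a m\<close> lies no closer to \<open>a n\<close> than
  \<open>s * a n\<close>, the value of the reference nodes.\<close>

lemma norm_k_factor_mult_quad_gap_le:
  assumes "m \<noteq> n" "norm (l m) \<le> \<epsilon> * a m" "\<epsilon> \<ge> 0"
    and sign: "0 \<le> (a m - (real (Suc n) / real (Suc m))\<^sup>2 * a n) * ((real (Suc n) / real (Suc m))\<^sup>2 - 1)"
  shows "norm (k_factor a l n m) * quad_gap n m \<le> 1 + \<epsilon> * (real (Suc n) / real (Suc m))\<^sup>2"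
proof -
  define s where "s = (real (Suc n) / real (Suc m))\<^sup>2"
  have gap: "quad_gap n m = \<bar>1 - s\<bar>" unfolding quad_gap_def s_def ..
  have D: "\<bar>a n - a m\<bar> > 0" using values_neq[OF assms(1)] by simp
  have "0 < (a m - a n) * (s - 1)"
  proof (cases "m < n")
    case True
    then have "1 < real (Suc n) / real (Suc m)" by simp
    then have "1 < s" unfolding s_def by (simp add: one_less_power)
    then show ?thesis using strict_decr[OF True] by simp
  next
    case False
    then have "real (Suc n) / real (Suc m) < 1" using assms(1) by simp
    then have "s < 1" unfolding s_def numeral_2_eq_2 by (intro power_Suc_less_one) auto
    then show ?thesis using strict_decr[of n m] False assms(1) by (simp add: mult_neg_neg)
  qed
  then have key: "(a n + \<epsilon> * a m) * \<bar>1 - s\<bar> \<le> (1 + \<epsilon> * s) * \<bar>a n - a m\<bar>"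
    using sign assms(3) unfolding s_def[symmetric] by (rule gap_cross_mult_le)
  have "norm (k_factor a l n m) * \<bar>1 - s\<bar> \<le> (a n + \<epsilon> * a m) / \<bar>a n - a m\<bar> * \<bar>1 - s\<bar>"
    using norm_k_factor_le[of m n l, OF assms(1,2)] by (rule mult_right_mono) simp
  also have "\<dots> = (a n + \<epsilon> * a m) * \<bar>1 - s\<bar> / \<bar>a n - a m\<bar>" by simp
  also have "\<dots> \<le> (1 + \<epsilon> * s) * \<bar>a n - a m\<bar> / \<bar>a n - a m\<bar>"
    using key by (rule divide_right_mono) simp
  also have "\<dots> = 1 + \<epsilon> * s" using D by simp
  finally show ?thesis unfolding gap s_def .
qed

end

section \<open>Slow decay: \<open>k\<close> is unbounded\<close>

locale slow_decay = pos_strict_decseq +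
  fixes d :: real and N0 :: nat
  assumes d_less: "d < 2"
    and weighted_incr: "N0 \<le> i \<Longrightarrow> i \<le> j \<Longrightarrow> real (Suc i) powr d * a i \<le> real (Suc j) powr d * a j"
begin

lemma gap_below_le_scaled_quad_gap:
  assumes "N0 \<le> m" "m < n"
  shows "\<bar>1 - a m / a n\<bar> \<le> (real (Suc n) / real (Suc m)) powr (d - 2) * quad_gap n m"
proof -
  define x where "x = real (Suc n) / real (Suc m)"
  have x: "x \<ge> 1" unfolding x_def using assms by simp
  have "a m / a n \<le> x powr d"
    unfolding x_def using assms pos by (intro div_le_ratio_powr weighted_incr) auto
  moreover have "\<bar>1 - a m / a n\<bar> = a m / a n - 1"
    using strict_decr[OF assms(2)] pos[of n] by simp
  moreover have gap: "quad_gap n m = x\<^sup>2 - 1" unfolding quad_gap_def x_def[symmetric] using x by simp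
  moreover have "x powr d - 1 \<le> x powr (d - 2) * (x\<^sup>2 - 1)"
    using powr_minus_one_le[OF x] d_less by simp
  ultimately show ?thesis unfolding x_def[symmetric] gap by linarith
qed

lemma gap_above_le_quad_gap:
  assumes "N0 \<le> n" "n < m"
  shows "\<bar>1 - a m / a n\<bar> \<le> quad_gap n m"
proof -
  define x where "x = real (Suc n) / real (Suc m)"
  have x: "0 < x" "x \<le> 1" unfolding x_def using assms by auto
  have "x powr d \<le> a m / a n"
    unfolding x_def using assms pos by (intro ratio_powr_le_div weighted_incr) auto
  moreover have "x\<^sup>2 \<le> x powr d"
    using x d_less powr_mono'[of d 2 x] by (simp add: powr_numeral)
  moreover have "\<bar>1 - a m / a n\<bar> = 1 - a m / a n"
    using strict_decr[OF assms(2)] pos[of n] by simp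
  moreover have "quad_gap n m = 1 - x\<^sup>2"
    unfolding quad_gap_def x_def[symmetric] using x by (simp add: power_le_one)
  ultimately show ?thesis by simp
qed

lemma gap_below_le_quad_gap:
  assumes "N0 \<le> m" "m < n"
  shows "\<bar>1 - a m / a n\<bar> \<le> quad_gap n m"
proof -
  have "1 \<le> real (Suc n) / real (Suc m)" using assms(2) by simp
  then have "(real (Suc n) / real (Suc m)) powr (d - 2) \<le> 1"
    using d_less powr_mono[of "d - 2" 0] by fastforce
  then have "(real (Suc n) / real (Suc m)) powr (d - 2) * quad_gap n m \<le> quad_gap n m"
    using quad_gap_pos[of m n] assms(2) by (intro mult_left_le_one_le) auto
  with gap_below_le_scaled_quad_gap[OF assms] show ?thesis by linarith
qed

lemma two_powr_mult_gap_le_quad_gap: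
  assumes "N0 \<le> m" "2 * Suc m \<le> Suc n"
  shows "2 powr (2 - d) * \<bar>1 - a m / a n\<bar> \<le> quad_gap n m"
proof -
  have "m < n" using assms(2) by simp
  have "(real (Suc n) / real (Suc m)) powr (d - 2) \<le> 2 powr (d - 2)"
    using two_le_Suc_ratio[OF assms(2)] d_less by (intro powr_mono2') auto
  then have "(real (Suc n) / real (Suc m)) powr (d - 2) * quad_gap n m \<le> 2 powr (d - 2) * quad_gap n m"
    using quad_gap_pos[of m n] \<open>m < n\<close> by (intro mult_right_mono) auto
  with gap_below_le_scaled_quad_gap[OF assms(1) \<open>m < n\<close>] have "\<bar>1 - a m / a n\<bar> \<le> 2 powr (d - 2) * quad_gap n m"
    by linarith
  then have "2 powr (2 - d) * \<bar>1 - a m / a n\<bar> \<le> 2 powr (2 - d) * (2 powr (d - 2) * quad_gap n m)"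
    by (rule mult_left_mono) simp
  also have "\<dots> = quad_gap n m" by (simp add: mult.assoc[symmetric] flip: powr_add)
  finally show ?thesis .
qed

definition weight :: "nat \<Rightarrow> nat \<Rightarrow> real" where
  "weight n m = (if m < N0 then a n / a 0 else if m < (n + 1) div 2 then 2 powr (2 - d) else 1)"

lemma weight_nonneg: "weight n m \<ge> 0"
  using pos[of n] pos[of 0] by (simp add: weight_def)

lemma weight_mult_gap_le:
  assumes "m \<noteq> n" "2 * N0 + 1 \<le> n"
  shows "weight n m * \<bar>1 - a m / a n\<bar> \<le> quad_gap n m"
proof -
  consider "m < N0" | "N0 \<le> m" "m < (n + 1) div 2" | "(n + 1) div 2 \<le> m" "m < n" | "n < m"
    using assms by linarith
  then show ?thesis
  proof cases
    case 1
    then have "2 * Suc m \<le> Suc n" "m < n" using assms by presburger+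
    have "a n / a 0 * \<bar>1 - a m / a n\<bar> \<le> 1" using \<open>m < n\<close> by (rule first_ratio_mult_gap_le_one)
    also have "1 \<le> quad_gap n m" using \<open>2 * Suc m \<le> Suc n\<close> by (rule quad_gap_ge_one)
    finally show ?thesis using 1 by (simp add: weight_def)
  next
    case 2
    moreover have "2 * Suc m \<le> Suc n" using 2 by presburger
    ultimately show ?thesis using two_powr_mult_gap_le_quad_gap by (simp add: weight_def)
  next
    case 3
    moreover have "N0 \<le> m" using 3 assms by presburger
    ultimately show ?thesis using gap_below_le_quad_gap by (simp add: weight_def)
  next
    case 4
    moreover have "N0 \<le> m" "\<not> m < (n + 1) div 2" using 4 assms by presburger+
    ultimately show ?thesis using gap_above_le_quad_gap[of n m] assms by (simp add: weight_def)
  qed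
qed

lemma norm_k_factor_ge_weight:
  assumes "m \<noteq> n" "2 * N0 + 1 \<le> n" "Re (l m) \<le> 0"
  shows "weight n m / quad_gap n m \<le> norm (k_factor a l n m)"
proof -
  have "\<bar>1 - a m / a n\<bar> > 0" using values_neq[OF assms(1)] pos[of n] by simp
  then have "weight n m / quad_gap n m \<le> 1 / \<bar>1 - a m / a n\<bar>"
    using weight_mult_gap_le[OF assms(1,2)] quad_gap_pos[OF assms(1)] by (simp add: field_simps)
  also have "\<dots> \<le> norm (k_factor a l n m)" using assms(1,3) by (rule norm_k_factor_ge)
  finally show ?thesis .
qed

lemma prod_weight:
  assumes "n < M" "2 * N0 + 1 \<le> n"
  shows "(\<Prod>m\<in>{..<M}-{n}. weight n m) = (a n / a 0) ^ N0 * (2 powr (2 - d)) ^ ((n + 1) div 2 - N0)"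
proof -
  define R where "R = {..<M} - {n}"
  have "weight n m = (if m < N0 then a n / a 0 else 1) *
      (if N0 \<le> m \<and> m < (n + 1) div 2 then 2 powr (2 - d) else 1)" for m
    by (simp add: weight_def)
  then have "prod (weight n) R = (\<Prod>m\<in>R. if m < N0 then a n / a 0 else 1) *
      (\<Prod>m\<in>R. if N0 \<le> m \<and> m < (n + 1) div 2 then 2 powr (2 - d) else 1)"
    by (simp add: prod.distrib)
  also have "\<dots> = (a n / a 0) ^ card {m\<in>R. m < N0} *
      (2 powr (2 - d)) ^ card {m\<in>R. N0 \<le> m \<and> m < (n + 1) div 2}"
    by (simp add: prod_if_const_power R_def)
  also have "{m\<in>R. m < N0} = {..<N0}" using assms unfolding R_def by auto
  also have "{m\<in>R. N0 \<le> m \<and> m < (n + 1) div 2} = {N0..<(n + 1) div 2}"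
    using assms unfolding R_def by auto
  finally show ?thesis unfolding R_def by simp
qed

lemma norm_prodinf_k_factor_ge:
  assumes "convergent_prod (k_factor a l n)" "\<And>m. Re (l m) \<le> 0" "2 * N0 + 1 \<le> n"
  shows "(a n / a 0) ^ N0 * (2 powr (2 - d)) ^ ((n + 1) div 2 - N0) \<le> norm (prodinf (k_factor a l n))"
proof (rule norm_prodinf_ge[OF assms(1)])
  have "eventually (\<lambda>M. (\<Prod>m\<in>{..<M}-{n}. quad_gap n m) < 1) sequentially"
    using prod_quad_gap_tendsto[of n] by (rule order_tendstoD) simp
  with eventually_gt_at_top[of n]
  show "eventually (\<lambda>M. (a n / a 0) ^ N0 * (2 powr (2 - d)) ^ ((n + 1) div 2 - N0)
      \<le> norm (\<Prod>m<M. k_factor a l n m)) sequentially"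
  proof eventually_elim
    case (elim M)
    define R where "R = {..<M} - {n}"
    have gap: "0 < prod (quad_gap n) R" "prod (quad_gap n) R < 1"
      using elim quad_gap_pos by (auto simp: R_def intro!: prod_pos)
    have "(a n / a 0) ^ N0 * (2 powr (2 - d)) ^ ((n + 1) div 2 - N0) = prod (weight n) R"
      unfolding R_def using elim assms(3) by (simp add: prod_weight)
    also have "\<dots> \<le> prod (weight n) R / prod (quad_gap n) R"
      using gap prod_nonneg[of R "weight n"] weight_nonneg by (simp add: le_divide_eq mult_left_le)
    also have "\<dots> = (\<Prod>m\<in>R. weight n m / quad_gap n m)" by (simp add: prod_dividef)
    also have "\<dots> \<le> (\<Prod>m\<in>R. norm (k_factor a l n m))"
      using norm_k_factor_ge_weight assms(2,3) weight_nonneg quad_gap_pos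
      by (intro prod_mono) (auto simp: R_def less_imp_le)
    also have "\<dots> = norm (\<Prod>m<M. k_factor a l n m)"
      unfolding prod_k_factor_remove[OF elim(1)] R_def by (simp add: prod_norm)
    finally show ?case .
  qed
qed

lemma norm_k_ge:
  assumes "k_well_defined a l" "\<And>m. Re (l m) \<le> 0" "\<And>n. norm (b n) \<le> B" "b n \<noteq> 0"
    and "2 * N0 + 1 \<le> n"
  shows "a n / B * ((a n / a 0) ^ N0 * (2 powr (2 - d)) ^ ((n + 1) div 2 - N0)) \<le> norm (k a b l n)"
proof -
  have k: "norm (k a b l n) = norm (complex_of_real (a n) - l n) / norm (b n) * norm (prodinf (k_factor a l n))"
    unfolding k_def by (simp add: norm_mult norm_divide)
  have "a n / B \<le> norm (complex_of_real (a n) - l n) / norm (b n)"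
    using norm_of_real_diff_ge[OF assms(2)] assms(3,4) pos[of n] by (intro frac_le) auto
  moreover have "(a n / a 0) ^ N0 * (2 powr (2 - d)) ^ ((n + 1) div 2 - N0) \<le> norm (prodinf (k_factor a l n))"
    using assms(1,2,5) unfolding k_well_defined_def by (intro norm_prodinf_k_factor_ge) auto
  ultimately show ?thesis
    unfolding k using pos[of n] pos[of 0] by (intro mult_mono) auto
qed

lemma powr_lower_bound:
  assumes "N0 \<le> n"
  shows "real (Suc N0) powr d * a N0 * real (Suc n) powr (- d) \<le> a n"
proof -
  have "real (Suc N0) powr d * a N0 * real (Suc n) powr (- d)
      \<le> real (Suc n) powr d * a n * real (Suc n) powr (- d)"
    using assms by (intro mult_right_mono weighted_incr) auto
  also have "\<dots> = a n" by (simp add: powr_minus field_simps)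
  finally show ?thesis .
qed

lemma norm_k_ge_exponential:
  assumes "k_well_defined a l" "\<And>m. Re (l m) \<le> 0" "\<And>n. norm (b n) \<le> B" "\<And>n. b n \<noteq> 0"
    and n: "2 * N0 + 1 \<le> n"
  defines "c \<equiv> real (Suc N0) powr d * a N0"
  shows "c / B * (c / a 0) ^ N0 * real (Suc n) powr (- d * (N0 + 1)) *
      (2 powr (2 - d)) powr (real (Suc n) / 2 - N0 - 1) \<le> norm (k a b l n)"
proof -
  define S where "S = real (Suc n)"
  define \<rho> where "\<rho> = (2::real) powr (2 - d)"
  have \<rho>: "\<rho> \<ge> 1" unfolding \<rho>_def using d_less by (intro ge_one_powr_ge_zero) auto
  have B: "B > 0" using assms(3)[of 0] assms(4)[of 0] by (meson norm_le_zero_iff not_le order_trans)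
  have A: "c * S powr (- d) \<le> a n" "c * S powr (- d) > 0"
    unfolding c_def S_def using n powr_lower_bound[of n] pos by auto
  have "\<rho> powr (S / 2 - N0 - 1) \<le> \<rho> powr real ((n + 1) div 2 - N0)"
    using \<rho> n by (intro powr_mono) (auto simp: S_def of_nat_diff)
  also have "\<dots> = \<rho> ^ ((n + 1) div 2 - N0)" using \<rho> by (simp add: powr_realpow)
  finally have "c * S powr (- d) / B * ((c * S powr (- d) / a 0) ^ N0 * \<rho> powr (S / 2 - N0 - 1))
      \<le> a n / B * ((a n / a 0) ^ N0 * \<rho> ^ ((n + 1) div 2 - N0))"
    using A B pos[of 0] \<rho>
    by (intro mult_mono divide_right_mono power_mono) (auto intro: less_imp_le)
  also have "\<dots> \<le> norm (k a b l n)" unfolding \<rho>_def using assms(1-4) n by (rule norm_k_ge)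
  also have "c * S powr (- d) / B * ((c * S powr (- d) / a 0) ^ N0 * \<rho> powr (S / 2 - N0 - 1))
      = c / B * (c / a 0) ^ N0 * S powr (- d * (N0 + 1)) * \<rho> powr (S / 2 - N0 - 1)"
  proof -
    have "(S powr (- d)) ^ N0 * S powr (- d) = S powr (- d * (N0 + 1))"
      unfolding S_def by (simp add: powr_realpow[symmetric] powr_powr powr_add[symmetric] algebra_simps)
    then show ?thesis by (simp add: power_mult_distrib power_divide field_simps)
  qed
  finally show ?thesis unfolding S_def \<rho>_def .
qed

theorem k_unbounded:
  assumes "k_well_defined a l" "\<And>m. Re (l m) \<le> 0" "bounded (range b)" "\<And>n. b n \<noteq> 0"
  shows "\<not> bounded (range (k a b l))"
proof
  assume "bounded (range (k a b l))"
  then obtain K where K: "\<And>n. norm (k a b l n) \<le> K" unfolding bounded_iff by auto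
  obtain B where B: "\<And>n. norm (b n) \<le> B" using assms(3) unfolding bounded_iff by auto
  define c where "c = real (Suc N0) powr d * a N0"
  define C where "C = c / B * (c / a 0) ^ N0"
  define \<rho> where "\<rho> = (2::real) powr (2 - d)"
  have "B > 0" using B[of 0] assms(4)[of 0] by (meson norm_le_zero_iff not_le order_trans)
  then have "C > 0" unfolding C_def c_def using pos by simp
  have "\<rho> > 1" unfolding \<rho>_def using d_less by (intro gr_one_powr) auto
  have "filterlim (\<lambda>x. C * x powr (- d * (N0 + 1)) * \<rho> powr (x / 2 - N0 - 1)) at_top at_top"
    using \<open>C > 0\<close> \<open>\<rho> > 1\<close> by real_asymp
  then have "filterlim (\<lambda>n. C * real (Suc n) powr (- d * (N0 + 1)) * \<rho> powr (real (Suc n) / 2 - N0 - 1))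
      at_top sequentially"
    by (rule filterlim_compose) (rule filterlim_compose[OF filterlim_real_sequentially filterlim_Suc])
  then have "eventually (\<lambda>n. K < C * real (Suc n) powr (- d * (N0 + 1)) * \<rho> powr (real (Suc n) / 2 - N0 - 1))
      sequentially"
    by (simp add: filterlim_at_top_dense)
  moreover have "eventually (\<lambda>n. C * real (Suc n) powr (- d * (N0 + 1)) * \<rho> powr (real (Suc n) / 2 - N0 - 1)
      \<le> norm (k a b l n)) sequentially"
    using eventually_ge_at_top[of "2 * N0 + 1"]
    by eventually_elim (use norm_k_ge_exponential[OF assms(1,2) B assms(4)] in \<open>simp add: C_def c_def \<rho>_def\<close>)
  ultimately have "eventually (\<lambda>n. K < norm (k a b l n)) sequentially"
    by eventually_elim simp
  then show False using K by (auto simp: not_less[symmetric] dest: eventually_happens')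
qed

end

section \<open>Fast decay: \<open>k\<close> is summable\<close>

locale fast_decay = pos_strict_decseq +
  fixes d :: real and N0 :: nat
  assumes d_gt: "2 < d"
    and weighted_decr: "N0 \<le> i \<Longrightarrow> i \<le> j \<Longrightarrow> real (Suc j) powr d * a j \<le> real (Suc i) powr d * a i"
begin

lemma summable_a: "summable a"
proof (rule summable_of_powr_decay)
  show "0 \<le> a n" for n using pos[of n] by simp
  show "1 < d" using d_gt by simp
qed (rule weighted_decr)

lemma sign_condition:
  assumes "N0 \<le> m" "N0 \<le> n"
  shows "0 \<le> (a m - (real (Suc n) / real (Suc m))\<^sup>2 * a n) * ((real (Suc n) / real (Suc m))\<^sup>2 - 1)"
proof -
  define x where "x = real (Suc n) / real (Suc m)"
  have "x > 0" by (simp add: x_def)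
  consider "m < n" | "m = n" | "n < m" by linarith
  then have "0 \<le> (a m - x\<^sup>2 * a n) * (x\<^sup>2 - 1)"
  proof cases
    case 1
    then have "1 \<le> x" by (simp add: x_def)
    then have "x\<^sup>2 \<le> x powr d" using d_gt powr_mono[of 2 d x] by (simp add: powr_numeral)
    also have "x powr d \<le> a m / a n"
      unfolding x_def using 1 assms pos by (intro ratio_powr_le_div weighted_decr) auto
    finally have "x\<^sup>2 * a n \<le> a m" using pos[of n] by (simp add: field_simps)
    then show ?thesis using \<open>1 \<le> x\<close> by (simp add: one_le_power)
  next
    case 2
    then show ?thesis by (simp add: x_def)
  next
    case 3
    then have "x \<le> 1" by (simp add: x_def)
    have "a m / a n \<le> x powr d"
      unfolding x_def using 3 assms pos by (intro div_le_ratio_powr weighted_decr) auto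
    also have "x powr d \<le> x\<^sup>2" using d_gt \<open>x > 0\<close> \<open>x \<le> 1\<close> powr_mono'[of 2 d x] by (simp add: powr_numeral)
    finally have "a m \<le> x\<^sup>2 * a n" using pos[of n] by (simp add: field_simps)
    moreover have "x\<^sup>2 \<le> 1" using \<open>x > 0\<close> \<open>x \<le> 1\<close> by (simp add: power_le_one)
    ultimately show ?thesis by (simp add: mult_nonpos_nonpos)
  qed
  then show ?thesis unfolding x_def .
qed

lemma norm_k_factor_mult_quad_gap_le_tail:
  assumes "N0 \<le> m" "N0 \<le> n" "m \<noteq> n" "norm (l m) \<le> \<epsilon> * a m" "\<epsilon> \<ge> 0"
  shows "norm (k_factor a l n m) * quad_gap n m \<le> 1 + \<epsilon> * (real (Suc n) / real (Suc m))\<^sup>2"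
  using assms(3-5) sign_condition[OF assms(1,2)] by (rule norm_k_factor_mult_quad_gap_le)

lemma norm_k_factor_le_far:
  assumes "N0 \<le> m" "m < n" "2 \<le> T" "T \<le> real (Suc n) / real (Suc m)"
    and "norm (l m) \<le> \<epsilon> * a m" "\<epsilon> \<ge> 0"
  shows "norm (k_factor a l n m) \<le> 2 / T powr d + 2 * \<epsilon>"
proof -
  have "4 \<le> T\<^sup>2" using assms(3) power_mono[of 2 T 2] by simp
  also have "T\<^sup>2 \<le> T powr d" using assms(3) d_gt powr_mono[of 2 d T] by (simp add: powr_numeral)
  finally have Td: "4 \<le> T powr d" .
  have "T powr d \<le> (real (Suc n) / real (Suc m)) powr d" using assms(3,4) d_gt by (intro powr_mono2) auto
  also have "\<dots> \<le> a m / a n"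
    using assms(1,2) pos by (intro ratio_powr_le_div weighted_decr) auto
  finally have am: "T powr d * a n \<le> a m" using pos[of n] by (simp add: field_simps)
  have "2 * a n \<le> T powr d * a n" using Td pos[of n] by (intro mult_right_mono) auto
  with am have am2: "2 * a n \<le> a m" by linarith
  have "norm (k_factor a l n m) \<le> (a n + \<epsilon> * a m) / (a m - a n)"
    using norm_k_factor_le[of m n l] assms(2,5) strict_decr[OF assms(2)] by simp
  also have "\<dots> \<le> (a n + \<epsilon> * a m) / (a m / 2)"
    using am2 pos[of n] pos[of m] assms(6) by (intro divide_left_mono) (auto intro: add_nonneg_nonneg)
  also have "\<dots> = 2 * (a n / a m) + 2 * \<epsilon>" using pos[of m] by (simp add: field_simps)
  also have "a n / a m \<le> 1 / T powr d"
  proof -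
    have "T powr d > 0" using assms(3) by simp
    then show ?thesis using am pos[of n] pos[of m] by (simp add: field_simps)
  qed
  finally show ?thesis by simp
qed

lemma norm_k_factor_mult_quad_gap_le_far:
  assumes "N0 \<le> m" "m < n" "2 \<le> T" "T \<le> real (Suc n) / real (Suc m)"
    and "norm (l m) \<le> \<epsilon> * a m" "\<epsilon> \<ge> 0"
  shows "norm (k_factor a l n m) * quad_gap n m \<le> (2 / T powr d + 2 * \<epsilon>) * (real (Suc n) / real (Suc m))\<^sup>2"
  using norm_k_factor_le_far[of m n T l \<epsilon>, OF assms] quad_gap_le_square[OF assms(2)] quad_gap_pos[of m n] assms(2)
  by (intro mult_mono) (auto intro: order_trans[OF norm_ge_zero])

lemma norm_k_factor_mult_quad_gap_le_piecewise:
  assumes lK: "\<And>m. K \<le> m \<Longrightarrow> norm (l m) \<le> \<epsilon> * a m" and "\<epsilon> \<ge> 0"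
    and C0: "\<And>m. m < K \<Longrightarrow> m < n \<Longrightarrow> norm (k_factor a l n m) \<le> C0"
    and "N0 \<le> K" "K \<le> J" "J \<le> n" "2 \<le> T"
    and J: "real J * T \<le> real (Suc n)" "real (Suc n) < (real J + 1) * T"
    and "m \<noteq> n"
  shows "norm (k_factor a l n m) * quad_gap n m \<le>
    (if m < K then C0 * (real (Suc n) / real (Suc m))\<^sup>2
     else if m < J then (2 / T powr d + 2 * \<epsilon>) * (real (Suc n) / real (Suc m))\<^sup>2
     else if m < n then 1 + \<epsilon> * T\<^sup>2 else 1 + \<epsilon> * (real (Suc n) / real (Suc m))\<^sup>2)"
proof -
  define x where "x = real (Suc n) / real (Suc m)"
  have gap: "0 < quad_gap n m" using \<open>m \<noteq> n\<close> by (rule quad_gap_pos)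
  consider "m < K" | "K \<le> m" "m < J" | "J \<le> m" "m < n" | "n < m"
    using assms(4-6,10) by linarith
  then show ?thesis
  proof cases
    case 1
    with assms(5,6) have "m < n" by linarith
    have "norm (k_factor a l n m) * quad_gap n m \<le> C0 * x\<^sup>2"
      using C0[OF 1 \<open>m < n\<close>] quad_gap_le_square[OF \<open>m < n\<close>] gap unfolding x_def
      by (intro mult_mono) (auto intro: order_trans[OF norm_ge_zero])
    then show ?thesis using 1 unfolding x_def by simp
  next
    case 2
    with assms(4-6) have "N0 \<le> m" "m < n" "K \<le> m" by linarith+
    have "real (Suc m) * T \<le> real J * T" using 2 assms(7) by (intro mult_right_mono) auto
    then have "T \<le> x" using J(1) unfolding x_def by (simp add: field_simps)
    then show ?thesis
      using 2 norm_k_factor_mult_quad_gap_le_far[of m n T l \<epsilon>] \<open>N0 \<le> m\<close> \<open>m < n\<close> assms(7)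
        lK[OF \<open>K \<le> m\<close>] \<open>\<epsilon> \<ge> 0\<close>
      unfolding x_def by simp
  next
    case 3
    with assms(4-6) have "N0 \<le> m" "N0 \<le> n" "K \<le> m" by linarith+
    have "norm (k_factor a l n m) * quad_gap n m \<le> 1 + \<epsilon> * x\<^sup>2"
      unfolding x_def using \<open>N0 \<le> m\<close> \<open>N0 \<le> n\<close> \<open>m \<noteq> n\<close> lK[OF \<open>K \<le> m\<close>] \<open>\<epsilon> \<ge> 0\<close>
      by (rule norm_k_factor_mult_quad_gap_le_tail)
    have "(real J + 1) * T \<le> real (Suc m) * T" using 3 assms(7) by (intro mult_right_mono) auto
    then have "real (Suc n) < real (Suc m) * T" using J(2) by linarith
    then have "x\<^sup>2 \<le> T\<^sup>2" unfolding x_def by (intro power_mono) (auto simp: field_simps)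
    then have "1 + \<epsilon> * x\<^sup>2 \<le> 1 + \<epsilon> * T\<^sup>2" using \<open>\<epsilon> \<ge> 0\<close> by (simp add: mult_left_mono)
    with \<open>norm (k_factor a l n m) * quad_gap n m \<le> 1 + \<epsilon> * x\<^sup>2\<close>
    have "norm (k_factor a l n m) * quad_gap n m \<le> 1 + \<epsilon> * T\<^sup>2" by linarith
    then show ?thesis using 3 \<open>K \<le> m\<close> unfolding x_def by simp
  next
    case 4
    with assms(4-6) have "N0 \<le> m" "N0 \<le> n" "K \<le> m" by linarith+
    have "norm (k_factor a l n m) * quad_gap n m \<le> 1 + \<epsilon> * x\<^sup>2"
      unfolding x_def using \<open>N0 \<le> m\<close> \<open>N0 \<le> n\<close> \<open>m \<noteq> n\<close> lK[OF \<open>K \<le> m\<close>] \<open>\<epsilon> \<ge> 0\<close>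
      by (rule norm_k_factor_mult_quad_gap_le_tail)
    then show ?thesis using 4 assms(4-6) unfolding x_def by simp
  qed
qed

lemma norm_prodinf_k_factor_le:
  assumes "convergent_prod (k_factor a l n)"
    and lK: "\<And>m. K \<le> m \<Longrightarrow> norm (l m) \<le> \<epsilon> * a m" and "\<epsilon> \<ge> 0"
    and C0: "\<And>m. m < K \<Longrightarrow> m < n \<Longrightarrow> norm (k_factor a l n m) \<le> C0" and "0 \<le> C0"
    and "N0 \<le> K" "K \<le> J" "J \<le> n" "2 \<le> T"
    and "real J * T \<le> real (Suc n)" "real (Suc n) < (real J + 1) * T"
  shows "norm (prodinf (k_factor a l n)) \<le> 2 * (C0 ^ K * (2 / T powr d + 2 * \<epsilon>) ^ (J - K) *
    (real (Suc n) ^ J / fact J)\<^sup>2 * (1 + \<epsilon> * T\<^sup>2) ^ (n - J) * exp (\<epsilon> * real (Suc n)))"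
proof (rule norm_prodinf_le[OF assms(1)])
  define \<eta> where "\<eta> = 2 / T powr d + 2 * \<epsilon>"
  define x where "x m = real (Suc n) / real (Suc m)" for m
  define u where "u m = (if m < K then C0 * (x m)\<^sup>2 else if m < J then \<eta> * (x m)\<^sup>2
    else if m < n then 1 + \<epsilon> * T\<^sup>2 else 1 + \<epsilon> * (x m)\<^sup>2)" for m
  have \<eta>: "\<eta> \<ge> 0" using \<open>\<epsilon> \<ge> 0\<close> \<open>2 \<le> T\<close> by (simp add: \<eta>_def)
  show "eventually (\<lambda>M. norm (\<Prod>m<M. k_factor a l n m) \<le> 2 * (C0 ^ K * \<eta> ^ (J - K) *
    (real (Suc n) ^ J / fact J)\<^sup>2 * (1 + \<epsilon> * T\<^sup>2) ^ (n - J) * exp (\<epsilon> * real (Suc n)))) sequentially"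
    using eventually_gt_at_top[of n]
  proof eventually_elim
    case (elim M)
    define R where "R = {..<M} - {n}"
    have "norm (k_factor a l n m) * quad_gap n m \<le> u m" if "m \<in> R" for m
      using norm_k_factor_mult_quad_gap_le_piecewise[OF lK \<open>\<epsilon> \<ge> 0\<close> C0 assms(6-11)] that
      unfolding u_def x_def \<eta>_def R_def by auto
    then have "norm (\<Prod>m<M. k_factor a l n m) \<le> 2 * prod u R"
      unfolding R_def using elim by (intro norm_prod_k_factor_le_double)
    have "prod u R = C0 ^ K * \<eta> ^ (J - K) * (\<Prod>m<J. (x m)\<^sup>2) *
        (1 + \<epsilon> * T\<^sup>2) ^ (n - J) * (\<Prod>m\<in>{n<..<M}. 1 + \<epsilon> * (x m)\<^sup>2)"
      unfolding u_def R_def using assms(7,8) elim by (intro prod_piecewise_split)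
    also have "(\<Prod>m<J. (x m)\<^sup>2) = (real (Suc n) ^ J / fact J)\<^sup>2"
      unfolding x_def by (rule prod_square_Suc_ratio)
    also have "(\<Prod>m\<in>{n<..<M}. 1 + \<epsilon> * (x m)\<^sup>2) \<le> exp (\<epsilon> * real (Suc n))"
      unfolding x_def using \<open>\<epsilon> \<ge> 0\<close> by (rule prod_one_plus_le_exp)
    finally have "prod u R \<le> C0 ^ K * \<eta> ^ (J - K) * (real (Suc n) ^ J / fact J)\<^sup>2 *
        (1 + \<epsilon> * T\<^sup>2) ^ (n - J) * exp (\<epsilon> * real (Suc n))"
      using \<open>0 \<le> C0\<close> \<eta> \<open>\<epsilon> \<ge> 0\<close> by (simp add: mult_left_mono)
    with \<open>norm (\<Prod>m<M. k_factor a l n m) \<le> 2 * prod u R\<close> show ?case by linarith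
  qed
qed

lemma norm_prodinf_k_factor_le_exp:
  fixes T \<epsilon> :: real
  defines "\<eta> \<equiv> 2 / T powr d + 2 * \<epsilon>"
  assumes "convergent_prod (k_factor a l n)"
    and lK: "\<And>m. K \<le> m \<Longrightarrow> norm (l m) \<le> \<epsilon> * a m" and "0 \<le> \<epsilon>"
    and C0: "\<And>m. m < K \<Longrightarrow> m < n \<Longrightarrow> norm (k_factor a l n m) \<le> C0" "0 \<le> C0"
    and "N0 \<le> K" "2 \<le> T" "\<eta> \<le> 1" "T * (real K + 1) \<le> real n"
  shows "norm (prodinf (k_factor a l n)) \<le> 2 * C0 ^ K * exp (- (real K + 1) * ln \<eta>) *
    exp ((ln \<eta> / T + 2 * (ln T + 1) / T + \<epsilon> * T\<^sup>2 + \<epsilon>) * real (Suc n))"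
proof -
  define N where "N = real (Suc n)"
  define J where "J = nat \<lfloor>N / T\<rfloor>"
  have "0 \<le> N / T" using assms(8) by (simp add: N_def)
  then have J: "real J \<le> N / T" "N / T < real J + 1" by (simp_all add: J_def)
  have "real K + 1 \<le> N / T" using assms(8,10) by (simp add: N_def field_simps)
  then have "K \<le> J" using J(2) by linarith
  have "T \<le> T * (real K + 1)" using assms(8) by simp
  with assms(8,10) have "2 \<le> real n" by linarith
  then have "N / T \<le> N / 2" using assms(8,10) by (intro divide_left_mono) (auto simp: N_def)
  also have "\<dots> \<le> real n" using \<open>2 \<le> real n\<close> by (simp add: N_def)
  finally have "J \<le> n" using J(1) by linarith
  have "\<eta> > 0" using assms(4,8) by (simp add: \<eta>_def add_pos_nonneg)
  have "norm (prodinf (k_factor a l n)) \<le> 2 * (C0 ^ K * \<eta> ^ (J - K) * (N ^ J / fact J)\<^sup>2 *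
      (1 + \<epsilon> * T\<^sup>2) ^ (n - J) * exp (\<epsilon> * N))"
    unfolding N_def \<eta>_def using J assms(8) \<open>K \<le> J\<close> \<open>J \<le> n\<close>
    by (intro norm_prodinf_k_factor_le[OF assms(2) lK assms(4) C0 assms(7)])
      (auto simp: N_def field_simps)
  also have "\<dots> \<le> 2 * (C0 ^ K * exp ((N / T - 1 - real K) * ln \<eta>) * (exp (N / T * (ln T + 1)))\<^sup>2 *
      exp (\<epsilon> * T\<^sup>2 * N) * exp (\<epsilon> * N))"
    using J \<open>\<eta> > 0\<close> assms(4,6,8,9) \<open>K \<le> J\<close> \<open>J \<le> n\<close> unfolding N_def
    by (intro mult_left_mono mult_right_mono mult_mono power_mono power_diff_le_exp_ln
        pow_div_fact_le_exp_scaled one_plus_power_le_exp)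
      (auto simp: N_def)
  also have "\<dots> = 2 * C0 ^ K * exp (- (real K + 1) * ln \<eta>) *
      exp ((ln \<eta> / T + 2 * (ln T + 1) / T + \<epsilon> * T\<^sup>2 + \<epsilon>) * N)"
    using assms(8) by (simp add: power2_eq_square mult_exp_exp field_simps)
  finally show ?thesis unfolding N_def .
qed

lemma exponent_choice:
  obtains T \<epsilon> :: real where "2 \<le> T" "0 < \<epsilon>" "\<epsilon> \<le> 1" "2 / T powr d + 2 * \<epsilon> \<le> 1"
    "ln (2 / T powr d + 2 * \<epsilon>) / T + 2 * (ln T + 1) / T + \<epsilon> * T\<^sup>2 + \<epsilon> < 0"
proof -
  define T where "T = max 2 (exp ((ln 4 + 3) / (d - 2)))"
  have T: "2 \<le> T" by (simp add: T_def)
  have "(ln 4 + 3) / (d - 2) \<le> ln T" unfolding T_def by (subst ln_ge_iff) auto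
  then have lnT: "ln 4 + 3 \<le> (d - 2) * ln T" using d_gt by (simp add: field_simps)
  have "4 \<le> T\<^sup>2" using T power_mono[of 2 T 2] by simp
  also have "T\<^sup>2 \<le> T powr d" using T d_gt powr_mono[of 2 d T] by (simp add: powr_numeral)
  finally have Td: "4 \<le> T powr d" .
  define \<epsilon> where "\<epsilon> = min (1 / T powr d) (1 / (4 * T * (T\<^sup>2 + 1)))"
  have "0 < 4 * T * (T\<^sup>2 + 1)" using T by (intro mult_pos_pos add_nonneg_pos) auto
  then have \<epsilon>: "0 < \<epsilon>" "\<epsilon> \<le> 1 / T powr d" "\<epsilon> * (T\<^sup>2 + 1) \<le> 1 / (4 * T)"
    using Td T by (auto simp: \<epsilon>_def min_def field_simps)
  define \<eta> where "\<eta> = 2 / T powr d + 2 * \<epsilon>"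
  have "0 < \<eta>" using \<epsilon> Td by (simp add: \<eta>_def add_pos_pos)
  have "\<eta> \<le> 4 / T powr d" using \<epsilon> by (simp add: \<eta>_def)
  moreover have "4 / T powr d \<le> 1" using Td by (simp add: divide_le_eq_1)
  ultimately have "\<eta> \<le> 1" by linarith
  have "ln \<eta> \<le> ln (4 / T powr d)" using \<open>\<eta> \<le> 4 / T powr d\<close> \<open>0 < \<eta>\<close> by (rule ln_mono)
  also have "\<dots> = ln 4 - d * ln T" using T by (simp add: ln_div ln_powr)
  finally have "ln \<eta> + 2 * (ln T + 1) \<le> - 1" using lnT by (simp add: algebra_simps)
  then have "(ln \<eta> + 2 * (ln T + 1)) / T \<le> - 1 / T" using T by (intro divide_right_mono) auto
  then have "ln \<eta> / T + 2 * (ln T + 1) / T \<le> - 1 / T" by (simp add: add_divide_distrib)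
  moreover have "1 / (4 * T) < 1 / T" using T by (simp add: field_simps)
  ultimately have "ln \<eta> / T + 2 * (ln T + 1) / T + \<epsilon> * T\<^sup>2 + \<epsilon> < 0"
    using \<epsilon>(3) by (simp add: algebra_simps)
  moreover have "1 / T powr d \<le> 1" using Td by (simp add: divide_le_eq_1)
  ultimately show ?thesis using that[of T \<epsilon>] T \<epsilon> \<open>\<eta> \<le> 1\<close> unfolding \<eta>_def by linarith
qed

lemma norm_k_le_exp:
  fixes T \<epsilon> :: real
  defines "\<eta> \<equiv> 2 / T powr d + 2 * \<epsilon>"
  assumes "k_well_defined a l"
    and lK: "\<And>m. K \<le> m \<Longrightarrow> norm (l m) \<le> \<epsilon> * a m" and "0 \<le> \<epsilon>" "\<epsilon> \<le> 1"
    and C0: "\<And>m n. m < K \<Longrightarrow> m < n \<Longrightarrow> norm (k_factor a l n m) \<le> C0" "0 \<le> C0"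
    and "N0 \<le> K" "2 \<le> T" "\<eta> \<le> 1" "T * (real K + 1) \<le> real n"
    and b: "a n / norm (b n) \<le> exp (\<delta> * real (Suc n))"
  shows "norm (k a b l n) \<le> 4 * C0 ^ K * exp (- (real K + 1) * ln \<eta>) *
    exp ((ln \<eta> / T + 2 * (ln T + 1) / T + \<epsilon> * T\<^sup>2 + \<epsilon> + \<delta>) * real (Suc n))"
proof -
  have "real K + 1 \<le> T * (real K + 1)" using assms(9) by simp
  then have "K \<le> n" using assms(11) by linarith
  have "norm (complex_of_real (a n) - l n) \<le> a n + \<epsilon> * a n"
    using norm_triangle_ineq4[of "complex_of_real (a n)" "l n"] lK[OF \<open>K \<le> n\<close>] pos[of n] by simp
  also have "\<dots> \<le> 2 * a n" using \<open>\<epsilon> \<le> 1\<close> pos[of n] by simp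
  finally have "norm (complex_of_real (a n) - l n) / norm (b n) \<le> 2 * (a n / norm (b n))"
    by (simp add: divide_right_mono)
  also have "\<dots> \<le> 2 * exp (\<delta> * real (Suc n))" using b by simp
  finally have first: "norm (complex_of_real (a n) - l n) / norm (b n) \<le> 2 * exp (\<delta> * real (Suc n))" .
  have "norm (k a b l n) = norm (complex_of_real (a n) - l n) / norm (b n) * norm (prodinf (k_factor a l n))"
    unfolding k_def by (simp add: norm_mult norm_divide)
  also have "\<dots> \<le> 2 * exp (\<delta> * real (Suc n)) * (2 * C0 ^ K * exp (- (real K + 1) * ln \<eta>) *
      exp ((ln \<eta> / T + 2 * (ln T + 1) / T + \<epsilon> * T\<^sup>2 + \<epsilon>) * real (Suc n)))"
    using assms(2) unfolding k_well_defined_def \<eta>_def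
    by (intro mult_mono first norm_prodinf_k_factor_le_exp lK C0) (use assms(4,7-11) \<eta>_def in auto)
  also have "\<dots> = 4 * C0 ^ K * exp (- (real K + 1) * ln \<eta>) *
      exp ((ln \<eta> / T + 2 * (ln T + 1) / T + \<epsilon> * T\<^sup>2 + \<epsilon> + \<delta>) * real (Suc n))"
    by (simp add: mult_exp_exp algebra_simps)
  finally show ?thesis .
qed

lemma eventually_norm_k_le_exp:
  assumes b: "(\<lambda>n. ln (a n / cmod (b n))) \<in> o(\<lambda>n. real (Suc n))" "\<And>n. b n \<noteq> 0"
    and wd: "k_well_defined a l" and "l \<longlonglongrightarrow> 0" and la: "(\<lambda>n. l n / complex_of_real (a n)) \<longlonglongrightarrow> 0"
  obtains C F :: real where "F < 0" "eventually (\<lambda>n. norm (k a b l n) \<le> C * exp (F * real (Suc n))) sequentially"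
proof -
  obtain T \<epsilon> where T: "2 \<le> T" "0 < \<epsilon>" "\<epsilon> \<le> 1" "2 / T powr d + 2 * \<epsilon> \<le> 1"
    and F: "ln (2 / T powr d + 2 * \<epsilon>) / T + 2 * (ln T + 1) / T + \<epsilon> * T\<^sup>2 + \<epsilon> < 0"
    by (rule exponent_choice)
  define F where "F = ln (2 / T powr d + 2 * \<epsilon>) / T + 2 * (ln T + 1) / T + \<epsilon> * T\<^sup>2 + \<epsilon>"
  obtain K1 where K1: "\<And>m. K1 \<le> m \<Longrightarrow> norm (l m) \<le> \<epsilon> * a m"
    using eventually_norm_le_mult[OF la pos \<open>0 < \<epsilon>\<close>] by (auto simp: eventually_at_top_linorder)
  define K where "K = max K1 N0"
  have lK: "norm (l m) \<le> \<epsilon> * a m" if "K \<le> m" for m using K1 that by (simp add: K_def)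
  have "N0 \<le> K" by (simp add: K_def)
  obtain L where L: "\<And>m. norm (l m) \<le> L"
    using convergent_imp_Bseq[OF convergentI[OF \<open>l \<longlonglongrightarrow> 0\<close>]] unfolding Bseq_def by auto
  define C0 where "C0 = Max (insert 0 ((\<lambda>m. (a 0 + L) / (a m - a (Suc m))) ` {..<K}))"
  have C0: "norm (k_factor a l n m) \<le> C0" if "m < K" "m < n" for m n
    using norm_k_factor_le_initial[OF that(2) L] that(1) unfolding C0_def
    by (fastforce intro: order_trans Max_ge)
  have "0 \<le> C0" unfolding C0_def by (intro Max_ge) auto
  have "eventually (\<lambda>n. norm (ln (a n / cmod (b n))) \<le> (- F / 2) * norm (real (Suc n))) sequentially"
    using F unfolding F_def[symmetric] by (intro landau_o.smallD[OF b(1)]) simp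
  moreover have "eventually (\<lambda>n. T * (real K + 1) \<le> real n) sequentially"
    by real_asymp
  ultimately have "eventually (\<lambda>n. norm (k a b l n) \<le>
      4 * C0 ^ K * exp (- (real K + 1) * ln (2 / T powr d + 2 * \<epsilon>)) * exp (F / 2 * real (Suc n))) sequentially"
  proof eventually_elim
    case (elim n)
    have "a n / norm (b n) = exp (ln (a n / norm (b n)))" using pos[of n] b(2)[of n] by simp
    also have "\<dots> \<le> exp (- F / 2 * real (Suc n))" using elim(1) by simp
    finally have "norm (k a b l n) \<le> 4 * C0 ^ K * exp (- (real K + 1) * ln (2 / T powr d + 2 * \<epsilon>)) *
        exp ((F + - F / 2) * real (Suc n))"
      using wd lK T C0 \<open>0 \<le> C0\<close> \<open>N0 \<le> K\<close> elim(2)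
      by (intro norm_k_le_exp[where T = T and \<epsilon> = \<epsilon> and \<delta> = "- F / 2", folded F_def]) auto
    then show ?case by simp
  qed
  moreover have "F / 2 < 0" using F unfolding F_def[symmetric] by simp
  ultimately show ?thesis by (rule that[rotated])
qed

theorem k_summable:
  assumes "(\<lambda>n. ln (a n / cmod (b n))) \<in> o(\<lambda>n. real (Suc n))" "\<And>n. b n \<noteq> 0"
    and "l \<in> c_H" and la: "(\<lambda>n. l n / complex_of_real (a n)) \<longlonglongrightarrow> 0"
  shows "k_well_defined a l \<and> summable (\<lambda>n. norm (k a b l n))"
proof
  have l: "\<And>m. Re (l m) \<le> 0" and "l \<longlonglongrightarrow> 0" using \<open>l \<in> c_H\<close> by (auto simp: c_H_def)
  show wd: "k_well_defined a l"
    unfolding k_well_defined_def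
    using convergent_prod_k_factor[OF summable_a l] eventually_norm_le_mult[OF la pos, of 1] by simp
  obtain C F where "F < 0" "eventually (\<lambda>n. norm (k a b l n) \<le> C * exp (F * real (Suc n))) sequentially"
    using eventually_norm_k_le_exp[OF assms(1,2) wd \<open>l \<longlonglongrightarrow> 0\<close> la] .
  then show "summable (\<lambda>n. norm (k a b l n))" by (rule summable_norm_of_le_exp)
qed

end

theorem theorem3:
  fixes a :: "nat \<Rightarrow> real" and b :: "nat \<Rightarrow> complex" and X :: seq_space
  assumes a_decr: "\<And>m n. m < n \<Longrightarrow> a n < a m"
    and a_pos: "\<And>n. 0 < a n"
    and a_lim: "a \<longlonglongrightarrow> 0"
    and X_valid: "valid_space X"
    and b_in: "in_space X b"
    and b_nz: "\<And>n. b n \<noteq> 0"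
  shows "((\<exists>d<2. eventually_incr (\<lambda>n. real (Suc n) powr d * a n)) \<longrightarrow>
            \<not> (\<exists>l\<in>c_H. k_well_defined a l \<and> bounded (range (k a b l))))
       \<and> ((\<exists>d>2. eventually_decr (\<lambda>n. real (Suc n) powr d * a n)) \<and>
            (\<lambda>n. ln (a n / cmod (b n))) \<in> o(\<lambda>n. real (Suc n)) \<longrightarrow>
            (\<forall>l\<in>c_H. (\<lambda>n. l n / complex_of_real (a n)) \<longlonglongrightarrow> 0 \<longrightarrow>
               k_well_defined a l \<and> summable (\<lambda>n. norm (k a b l n))))"
proof (rule conjI; intro impI ballI notI)
  assume "\<exists>d<2. eventually_incr (\<lambda>n. real (Suc n) powr d * a n)"
  then obtain d N0 where "slow_decay a d N0"
    unfolding eventually_incr_def slow_decay_def slow_decay_axioms_def pos_strict_decseq_def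
    using a_decr a_pos by blast
  moreover assume "\<exists>l\<in>c_H. k_well_defined a l \<and> bounded (range (k a b l))"
  ultimately show False
    using slow_decay.k_unbounded in_space_imp_bounded[OF X_valid b_in] b_nz by (fastforce simp: c_H_def)
next
  fix l
  assume decay: "(\<exists>d>2. eventually_decr (\<lambda>n. real (Suc n) powr d * a n)) \<and>
      (\<lambda>n. ln (a n / cmod (b n))) \<in> o(\<lambda>n. real (Suc n))"
    and "l \<in> c_H" "(\<lambda>n. l n / complex_of_real (a n)) \<longlonglongrightarrow> 0"
  obtain d N0 where "fast_decay a d N0"
    using decay unfolding eventually_decr_def fast_decay_def fast_decay_axioms_def pos_strict_decseq_def
    using a_decr a_pos by blast
  with decay \<open>l \<in> c_H\<close> \<open>(\<lambda>n. l n / complex_of_real (a n)) \<longlonglongrightarrow> 0\<close>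
  show "k_well_defined a l \<and> summable (\<lambda>n. norm (k a b l n))"
    using fast_decay.k_summable b_nz by blast
qed

end
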